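(* Let $I\subseteq\mathbb{R}$ be an interval, let $f:I\to\mathbb{R}$ be differentiable on the interior $I^\circ$ of $I$, and let $a,b\in I$ with $a<b$ and $f'\in L^1[a,b]$. Let $s\in(0,1]$, $\alpha\in[0,1]$, $m\in(0,1]$, assume $b/m\in I^\circ$, and let $p>1$ and $q=\frac{p}{p-1}$. If $|f'|^q$ is $s$-$(\alpha,m)$-convex (in the first sense) on $[a,b]$, then $$\left|\frac{f(a)+f(b)}{2}-\frac{1}{b-a}\int_a^b f(x)\,dx\right|\le \frac{b-a}{2(p+1)^{1/p}}\left[\frac{|f'(a)|^q+m\alpha s\left|f'\!\left(\frac{b}{m}\right)\right|^q}{\alpha s+1}\right]^{1/q}.$$
   Context: Let $s\in(0,1]$, $\alpha\in[0,1]$, $m\in(0,1]$. A nonnegative function $g$ is called $s$-$(\alpha,m)$-convex (in the first sense) on $[a,b]$ if for all $x,y\in[a,b]$ (with $y/m$ in the domain of $g$) and all $t\in[0,1]$, $$g(tx+(1-t)y)\le t^{\alpha s}g(x)+m\,(1-t^{\alpha s})\,g\!\left(\frac{y}{m}\right).$$ *)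

theory Defs
  imports "HOL-Analysis.Analysis"
begin

text \<open>Real power t^e for t \<ge> 0 with the usual convention 0^0 = 1
  (Isabelle's powr has 0 powr 0 = 0).\<close>
definition rpow :: "real \<Rightarrow> real \<Rightarrow> real" where
  "rpow t e = (if t = 0 \<and> e = 0 then 1 else t powr e)"

text \<open>s-(alpha,m)-convexity in the first sense of a nonnegative function g on [a,b];
  D is the domain of g (the condition is required whenever y/m lies in D).\<close>
definition s_alpha_m_convex ::
  "(real \<Rightarrow> real) \<Rightarrow> real set \<Rightarrow> real \<Rightarrow> real \<Rightarrow> real \<Rightarrow> real \<Rightarrow> real \<Rightarrow> bool" where
  "s_alpha_m_convex g D s \<alpha> m a b \<longleftrightarrow>
     (\<forall>x\<in>{a..b}. g x \<ge> 0) \<and>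
     (\<forall>x\<in>{a..b}. \<forall>y\<in>{a..b}. y / m \<in> D \<longrightarrow> (\<forall>t\<in>{0..1}.
        g (t * x + (1 - t) * y) \<le> rpow t (\<alpha> * s) * g x + m * (1 - rpow t (\<alpha> * s)) * g (y / m)))"

end

theory Submission
  imports Defs
begin

text \<open>With c = (a + b)/2, integration by parts gives
  (b - a)(f a + f b)/2 - \<integral>f = \<integral>(x - c) f' x over [a,b].  Hoelder's inequality
  bounds this by (\<integral>|x - c|^p)^(1/p) (\<integral>|f'|^q)^(1/q).  Writing x = t a + (1 - t) b with
  t = (b - x)/(b - a), the s-(\<alpha>,m)-convexity of |f'|^q bounds it pointwise by a chord whose
  integral is (b - a)(|f' a|^q + m \<alpha> s |f'(b/m)|^q)/(\<alpha> s + 1); the remaining power integrals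
  are elementary.  Hoelder itself comes from integrating Young's inequality with an optimally
  chosen scaling.\<close>

lemma has_integral_powr_shifted:
  fixes e u v :: real
  assumes e: "e \<ge> 0" and uv: "u \<le> v"
  shows "((\<lambda>x. (x - u) powr e) has_integral (v - u) powr (e + 1) / (e + 1)) {u..v}"
proof -
  have "((\<lambda>x. (x - u) powr e) has_integral
          ((\<lambda>x. (x - u) powr (e + 1) / (e + 1)) v - (\<lambda>x. (x - u) powr (e + 1) / (e + 1)) u)) {u..v}"
  proof (rule fundamental_theorem_of_calculus_interior[OF uv])
    show "continuous_on {u..v} (\<lambda>x. (x - u) powr (e + 1) / (e + 1))"
      using e by (intro continuous_intros continuous_on_powr') auto
    fix x assume x: "x \<in> {u<..<v}"
    have "((\<lambda>x. (x - u) powr (e + 1)) has_real_derivative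
           ((e + 1) * (x - u) powr (e + 1 - of_nat 1) * 1)) (at x)"
      using x by (intro DERIV_fun_powr derivative_eq_intros) auto
    then have "((\<lambda>x. (x - u) powr (e + 1) / (e + 1)) has_real_derivative
           ((e + 1) * (x - u) powr (e + 1 - of_nat 1) * 1) / (e + 1)) (at x)"
      by (rule DERIV_cdivide)
    then show "((\<lambda>x. (x - u) powr (e + 1) / (e + 1)) has_vector_derivative (x - u) powr e) (at x)"
      using e by (simp add: has_real_derivative_iff_has_vector_derivative)
  qed
  then show ?thesis using e by simp
qed

lemma has_integral_powr_reflected:
  fixes e u v :: real
  assumes e: "e \<ge> 0" and uv: "u \<le> v"
  shows "((\<lambda>x. (v - x) powr e) has_integral (v - u) powr (e + 1) / (e + 1)) {u..v}"
proof -
  have "((\<lambda>x. (v - x) powr e) has_integral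
          ((\<lambda>x. - ((v - x) powr (e + 1) / (e + 1))) v - (\<lambda>x. - ((v - x) powr (e + 1) / (e + 1))) u)) {u..v}"
  proof (rule fundamental_theorem_of_calculus_interior[OF uv])
    show "continuous_on {u..v} (\<lambda>x. - ((v - x) powr (e + 1) / (e + 1)))"
      using e by (intro continuous_intros continuous_on_powr') auto
    fix x assume x: "x \<in> {u<..<v}"
    have "((\<lambda>x. (v - x) powr (e + 1)) has_real_derivative
           ((e + 1) * (v - x) powr (e + 1 - of_nat 1) * (0 - 1))) (at x)"
      using x by (intro DERIV_fun_powr derivative_eq_intros) auto
    then have "((\<lambda>x. - ((v - x) powr (e + 1) / (e + 1))) has_real_derivative
           - (((e + 1) * (v - x) powr (e + 1 - of_nat 1) * (0 - 1)) / (e + 1))) (at x)"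
      by (intro DERIV_cdivide DERIV_minus)
    then show "((\<lambda>x. - ((v - x) powr (e + 1) / (e + 1))) has_vector_derivative (v - x) powr e) (at x)"
      using e by (simp add: has_real_derivative_iff_has_vector_derivative)
  qed
  then show ?thesis using e by simp
qed

lemma has_integral_abs_powr_midpoint:
  fixes e a b :: real
  assumes e: "e \<ge> 0" and ab: "a \<le> b"
  shows "((\<lambda>x. \<bar>x - (a + b) / 2\<bar> powr e) has_integral 2 * ((b - a) / 2) powr (e + 1) / (e + 1)) {a..b}"
proof -
  define c where "c = (a + b) / 2"
  have ac: "a \<le> c" "c \<le> b" and half: "c - a = (b - a) / 2" "b - c = (b - a) / 2"
    using ab by (auto simp: c_def field_simps)
  have "((\<lambda>x. \<bar>x - c\<bar> powr e) has_integral ((b - a) / 2) powr (e + 1) / (e + 1)) {a..c}"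
    using has_integral_powr_reflected[OF e ac(1)] unfolding half
    by (subst has_integral_cong) auto
  moreover have "((\<lambda>x. \<bar>x - c\<bar> powr e) has_integral ((b - a) / 2) powr (e + 1) / (e + 1)) {c..b}"
    using has_integral_powr_shifted[OF e ac(2)] unfolding half
    by (subst has_integral_cong) auto
  ultimately show ?thesis
    using has_integral_combine[OF ac] unfolding c_def by fastforce
qed

lemma has_integral_rpow_ratio:
  fixes e a b :: real
  assumes e: "e \<ge> 0" and ab: "a < b"
  shows "((\<lambda>x. rpow ((b - x) / (b - a)) e) has_integral (b - a) / (e + 1)) {a..b}"
proof -
  have "((\<lambda>x. (b - x) powr e / (b - a) powr e) has_integral
          (b - a) powr (e + 1) / (e + 1) / (b - a) powr e) {a..b}"
    using has_integral_powr_reflected[OF e, of a b] ab by (intro has_integral_divide) auto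
  moreover have "(b - a) powr (e + 1) / (e + 1) / (b - a) powr e = (b - a) / (e + 1)"
    using ab by (simp add: powr_add)
  ultimately have powr_integral:
    "((\<lambda>x. (b - x) powr e / (b - a) powr e) has_integral (b - a) / (e + 1)) {a..b}"
    by simp
  show ?thesis
  proof (rule has_integral_spike_finite[OF _ _ powr_integral, of "{b}"])
    fix x assume "x \<in> {a..b} - {b}"
    then show "rpow ((b - x) / (b - a)) e = (b - x) powr e / (b - a) powr e"
      using ab by (simp add: rpow_def powr_divide)
  qed auto
qed

lemma conjugate_exponent_gt_1:
  fixes p q :: real
  assumes "p > 1" "1 / p + 1 / q = 1"
  shows "q > 1"
proof -
  have "1 / q = 1 - 1 / p" using assms(2) by simp
  moreover have "0 < 1 - 1 / p" "1 - 1 / p < 1" using assms(1) by auto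
  ultimately have "0 < 1 / q" "1 / q < 1" by simp_all
  then show ?thesis by (simp add: divide_less_eq split: if_splits)
qed

lemma Youngs_inequality_scaled:
  fixes p q l x y :: real
  assumes "p > 1" "q > 1" "1 / p + 1 / q = 1" "l > 0" "x \<ge> 0" "y \<ge> 0"
  shows "x * y \<le> l powr p * x powr p / p + y powr q / (l powr q * q)"
proof -
  have "(l * x) * (y / l) \<le> (l * x) powr p / p + (y / l) powr q / q"
    using assms by (intro Youngs_inequality) auto
  then show ?thesis
    using assms by (simp add: powr_mult powr_divide)
qed

lemma Youngs_inequality_scaled_optimum:
  fixes P Q p q :: real
  assumes P: "P > 0" and Q: "Q > 0" and p: "p > 1" and pq: "1 / p + 1 / q = 1"
  defines "l \<equiv> (Q / P) powr (1 / (p * q))"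
  shows "l powr p * P / p + Q / (l powr q * q) = P powr (1 / p) * Q powr (1 / q)"
proof -
  have q: "q > 0"
    using conjugate_exponent_gt_1[OF p pq] by simp
  define M where "M = P powr (1 / p) * Q powr (1 / q)"
  have lp: "l powr p = (Q / P) powr (1 / q)" and lq: "l powr q = (Q / P) powr (1 / p)"
    using p q unfolding l_def by (simp_all add: powr_powr)
  have "l powr p * P = M"
  proof -
    have "l powr p * P = Q powr (1 / q) / P powr (1 / q) * (P powr (1 / p) * P powr (1 / q))"
      using P Q lp by (simp flip: powr_add add: pq powr_divide)
    also have "\<dots> = M" using P unfolding M_def by simp
    finally show ?thesis .
  qed
  moreover have "Q / l powr q = M"
  proof -
    have "Q / l powr q = (Q powr (1 / p) * Q powr (1 / q)) / (Q powr (1 / p) / P powr (1 / p))"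
      using P Q lq by (simp flip: powr_add add: pq powr_divide)
    also have "\<dots> = M" using Q unfolding M_def by simp
    finally show ?thesis .
  qed
  ultimately have "l powr p * P / p + Q / (l powr q * q) = M * (1 / p + 1 / q)"
    by (metis distrib_left divide_divide_eq_left times_divide_eq_right mult.right_neutral)
  then show ?thesis
    using pq M_def by simp
qed

lemma has_integral_Holder_bound:
  fixes g h G :: "real \<Rightarrow> real" and S :: "real set"
  assumes p: "p > 1" and pq: "1 / p + 1 / q = 1"
    and J: "((\<lambda>x. g x * h x) has_integral J) S"
    and P: "((\<lambda>x. \<bar>g x\<bar> powr p) has_integral P) S" "P > 0"
    and Q: "(G has_integral Q) S"
    and h_le_G: "\<And>x. x \<in> S \<Longrightarrow> \<bar>h x\<bar> powr q \<le> G x"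
  shows "\<bar>J\<bar> \<le> P powr (1 / p) * Q powr (1 / q)"
proof -
  have q: "q > 1" using conjugate_exponent_gt_1[OF p pq] .
  have Young: "\<bar>J\<bar> \<le> l powr p * P / p + Q / (l powr q * q)" if l: "l > 0" for l
  proof -
    have majorant: "((\<lambda>x. l powr p * \<bar>g x\<bar> powr p / p + G x / (l powr q * q)) has_integral
            l powr p * P / p + Q / (l powr q * q)) S"
      by (intro has_integral_add has_integral_divide has_integral_mult_right P Q)
    have "norm (g x * h x) \<le> l powr p * \<bar>g x\<bar> powr p / p + G x / (l powr q * q)"
      if "x \<in> S" for x
    proof -
      have "\<bar>g x\<bar> * \<bar>h x\<bar> \<le> l powr p * \<bar>g x\<bar> powr p / p + \<bar>h x\<bar> powr q / (l powr q * q)"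
        using p q pq l by (intro Youngs_inequality_scaled) auto
      also have "\<dots> \<le> l powr p * \<bar>g x\<bar> powr p / p + G x / (l powr q * q)"
        using h_le_G[OF that] l q by (intro add_left_mono divide_right_mono) auto
      finally show ?thesis by (simp add: abs_mult)
    qed
    then have "norm (integral S (\<lambda>x. g x * h x))
        \<le> integral S (\<lambda>x. l powr p * \<bar>g x\<bar> powr p / p + G x / (l powr q * q))"
      using J majorant by (intro integral_norm_bound_integral) auto
    then show ?thesis
      using J majorant by (simp add: integral_unique)
  qed
  have "Q \<ge> 0"
    using Q by (rule has_integral_nonneg) (meson h_le_G order_trans powr_ge_zero)
  then consider "Q = 0" | "Q > 0" by linarith
  then show ?thesis
  proof cases
    case 1
    \<comment> \<open>Letting the scaling l tend to 0 forces J = 0.\<close>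
    show ?thesis
    proof (rule ccontr)
      assume "\<not> ?thesis"
      then have J_pos: "\<bar>J\<bar> > 0" using 1 by simp
      define l where "l = (\<bar>J\<bar> * p / (2 * P)) powr (1 / p)"
      have "l > 0" "l powr p = \<bar>J\<bar> * p / (2 * P)"
        using J_pos p P(2) by (simp_all add: l_def powr_powr)
      moreover from this(2) have "l powr p * P / p = \<bar>J\<bar> / 2"
        using p P(2) by simp
      ultimately show False
        using Young[of l] 1 J_pos by simp
    qed
  next
    case 2
    show ?thesis
      using Young[of "(Q / P) powr (1 / (p * q))"] P(2) 2
      by (simp add: Youngs_inequality_scaled_optimum[OF P(2) 2 p pq])
  qed
qed

lemma has_integral_midpoint_kernel:
  fixes f f' :: "real \<Rightarrow> real" and a b :: real
  assumes ab: "a \<le> b"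
    and deriv: "\<And>x. x \<in> {a..b} \<Longrightarrow> (f has_real_derivative f' x) (at x within {a..b})"
  shows "((\<lambda>x. (x - (a + b) / 2) * f' x) has_integral
           (b - a) * (f a + f b) / 2 - integral {a..b} f) {a..b}"
proof -
  define c where "c = (a + b) / 2"
  have "((\<lambda>x. f x + (x - c) * f' x) has_integral
          ((\<lambda>x. (x - c) * f x) b - (\<lambda>x. (x - c) * f x) a)) {a..b}"
  proof (rule fundamental_theorem_of_calculus[OF ab])
    fix x assume x: "x \<in> {a..b}"
    have "((\<lambda>x. (x - c) * f x) has_real_derivative ((1 - 0) * f x + f' x * (x - c))) (at x within {a..b})"
      by (intro DERIV_mult derivative_intros deriv x)
    then show "((\<lambda>x. (x - c) * f x) has_vector_derivative f x + (x - c) * f' x) (at x within {a..b})"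
      by (simp add: has_real_derivative_iff_has_vector_derivative algebra_simps)
  qed
  moreover have "f integrable_on {a..b}"
    using deriv by (intro integrable_continuous_interval DERIV_continuous_on)
  ultimately have "((\<lambda>x. (f x + (x - c) * f' x) - f x) has_integral
          ((b - c) * f b - (a - c) * f a) - integral {a..b} f) {a..b}"
    by (intro has_integral_diff integrable_integral) simp_all
  moreover have "(b - c) * f b - (a - c) * f a = (b - a) * (f a + f b) / 2"
    unfolding c_def by (simp add: field_simps)
  ultimately show ?thesis
    unfolding c_def by simp
qed

lemma s_alpha_m_convex_le_chord:
  assumes cvx: "s_alpha_m_convex g D s \<alpha> m a b"
    and ab: "a < b" and bm: "b / m \<in> D" and x: "x \<in> {a..b}"
  shows "g x \<le> rpow ((b - x) / (b - a)) (\<alpha> * s) * g a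
                + m * (1 - rpow ((b - x) / (b - a)) (\<alpha> * s)) * g (b / m)"
proof -
  define t where "t = (b - x) / (b - a)"
  have t: "t \<in> {0..1}"
    using x ab unfolding t_def by (auto simp: field_simps)
  have "t * (b - a) = b - x"
    using ab unfolding t_def by simp
  then have "t * a + (1 - t) * b = x"
    by (simp add: algebra_simps)
  then show ?thesis
    using cvx ab bm t unfolding s_alpha_m_convex_def t_def[symmetric] by force
qed

lemma has_integral_s_alpha_m_chord:
  fixes a b e m A B :: real
  assumes ab: "a < b" and e: "e \<ge> 0"
  shows "((\<lambda>x. rpow ((b - x) / (b - a)) e * A + m * (1 - rpow ((b - x) / (b - a)) e) * B)
           has_integral (b - a) * ((A + m * e * B) / (e + 1))) {a..b}"
proof -
  have "((\<lambda>x. m * B + (A - m * B) * rpow ((b - x) / (b - a)) e) has_integral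
          (b - a) * (m * B) + (A - m * B) * ((b - a) / (e + 1))) {a..b}"
    using has_integral_const_real[of "m * B" a b] ab
    by (intro has_integral_add has_integral_mult_right has_integral_rpow_ratio e) auto
  moreover have "(b - a) * (m * B) + (A - m * B) * ((b - a) / (e + 1))
      = (b - a) * ((A + m * e * B) / (e + 1))"
    using e by (simp add: field_simps)
  ultimately show ?thesis
    by (simp add: algebra_simps)
qed

lemma Holder_midpoint_constant_eq:
  fixes a b K p q :: real
  assumes ab: "a < b" and K: "K \<ge> 0" and p: "p > 1" and pq: "1 / p + 1 / q = 1"
  shows "(2 * ((b - a) / 2) powr (p + 1) / (p + 1)) powr (1 / p) * ((b - a) * K) powr (1 / q)
       = (b - a) ^ 2 / (2 * (p + 1) powr (1 / p)) * K powr (1 / q)"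
proof -
  define h where "h = (b - a) / 2"
  have h: "h > 0" and ba: "b - a = 2 * h"
    using ab by (simp_all add: h_def)
  have "(2 * h powr (p + 1) / (p + 1)) powr (1 / p)
      = 2 powr (1 / p) * h powr ((p + 1) / p) / (p + 1) powr (1 / p)"
    using h p by (simp add: powr_divide powr_mult powr_powr)
  moreover have "((2 * h) * K) powr (1 / q) = 2 powr (1 / q) * h powr (1 / q) * K powr (1 / q)"
    using h K by (simp add: powr_mult)
  moreover have "2 powr (1 / p) * 2 powr (1 / q) = (2::real)"
    by (simp flip: powr_add add: pq)
  moreover have "(p + 1) / p + 1 / q = 2"
    using p pq by (simp add: add_divide_distrib)
  then have "h powr ((p + 1) / p) * h powr (1 / q) = h * h"
    using h by (simp flip: powr_add add: power2_eq_square)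
  ultimately show ?thesis
    unfolding ba by (simp add: field_simps power2_eq_square)
qed

theorem theorem2:
  fixes I :: "real set" and f f' :: "real \<Rightarrow> real"
    and a b s \<alpha> m p q :: real
  assumes I: "is_interval I"
    and deriv: "\<And>x. x \<in> interior I \<Longrightarrow> (f has_real_derivative f' x) (at x)"
    and ab: "a \<in> interior I" "b \<in> interior I" "a < b"
    and L1: "f' absolutely_integrable_on {a..b}"
    and s: "0 < s" "s \<le> 1"
    and \<alpha>: "0 \<le> \<alpha>" "\<alpha> \<le> 1"
    and m: "0 < m" "m \<le> 1"
    and bm: "b / m \<in> interior I"
    and p: "p > 1" and q: "q = p / (p - 1)"
    and cvx: "s_alpha_m_convex (\<lambda>x. \<bar>f' x\<bar> powr q) (interior I) s \<alpha> m a b"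
  shows "\<bar>(f a + f b) / 2 - integral {a..b} f / (b - a)\<bar>
         \<le> (b - a) / (2 * (p + 1) powr (1 / p)) *
           ((\<bar>f' a\<bar> powr q + m * \<alpha> * s * \<bar>f' (b / m)\<bar> powr q) / (\<alpha> * s + 1)) powr (1 / q)"
proof -
  define A where "A = \<bar>f' a\<bar> powr q"
  define B where "B = \<bar>f' (b / m)\<bar> powr q"
  define K where "K = (A + m * \<alpha> * s * B) / (\<alpha> * s + 1)"
  define P where "P = 2 * ((b - a) / 2) powr (p + 1) / (p + 1)"
  have pq: "1 / p + 1 / q = 1"
    using p unfolding q by (simp add: diff_divide_distrib)
  have "is_interval (interior I)"
    using I by (simp add: is_interval_convex_1 convex_interior)
  then have "{a..b} \<subseteq> interior I"
    using ab interval_subset_is_interval[of "interior I" a b] by simp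
  then have kernel: "((\<lambda>x. (x - (a + b) / 2) * f' x) has_integral
      (b - a) * (f a + f b) / 2 - integral {a..b} f) {a..b}"
    using ab deriv by (intro has_integral_midpoint_kernel) (auto intro!: has_field_derivative_at_within deriv)
  have chord: "((\<lambda>x. rpow ((b - x) / (b - a)) (\<alpha> * s) * A
      + m * (1 - rpow ((b - x) / (b - a)) (\<alpha> * s)) * B) has_integral (b - a) * K) {a..b}"
    using has_integral_s_alpha_m_chord[OF ab(3), of "\<alpha> * s" A m B] \<alpha> s
    unfolding K_def by (simp add: mult.assoc)
  have "\<bar>(b - a) * (f a + f b) / 2 - integral {a..b} f\<bar> \<le> P powr (1 / p) * ((b - a) * K) powr (1 / q)"
    using s_alpha_m_convex_le_chord[OF cvx ab(3) bm]
    by (intro has_integral_Holder_bound[OF p pq kernel _ _ chord])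
      (use p ab in \<open>auto simp: P_def A_def B_def intro: has_integral_abs_powr_midpoint\<close>)
  also have "\<dots> = (b - a) ^ 2 / (2 * (p + 1) powr (1 / p)) * K powr (1 / q)"
    unfolding P_def using ab p pq \<alpha> s m by (intro Holder_midpoint_constant_eq) (auto simp: K_def A_def B_def)
  finally show ?thesis
    using ab unfolding K_def A_def B_def
    by (simp add: abs_divide field_simps power2_eq_square)
qed

end
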